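(* If $G/H$ has a $G$-invariant essential Codazzi tensor field $A$, then the non-associative algebra $(\mathfrak{m},[\cdot,\cdot]_{\mathfrak{m}})$ cannot be nilpotent or split-solvable.
   Context: Let $G$ be a Lie group and $H$ a closed Lie subgroup, with Lie algebras $\mathfrak{g}$ and $\mathfrak{h}$. Assume $G/H$ is reductive: there is a vector space direct sum decomposition $\mathfrak{g} = \mathfrak{h}\oplus\mathfrak{m}$ with $\mathfrak{m}$ invariant under ${\rm Ad}(H)$. Write $[X,Y]_{\mathfrak{m}}$ for the $\mathfrak{m}$-component of the Lie bracket $[X,Y]$, so that $(\mathfrak{m},[\cdot,\cdot]_{\mathfrak{m}})$ is a non-associative algebra; $\mathfrak{m}$ is identified with $T_{eH}(G/H)$. Equip $G/H$ with a $G$-invariant Riemannian metric $\langle\cdot,\cdot\rangle$ and its Levi-Civita connection $\nabla$. A twice-covariant symmetric tensor field $A$ is Codazzi if $(\nabla_X A)(Y,Z) = (\nabla_Y A)(X,Z)$ for all vector fields $X,Y,Z$. For a $G$-invariant such $A$, decompose $\mathfrak{m} = \mathfrak{m}_1\oplus\cdots\oplus\mathfrak{m}_r$ orthogonally into the eigenspaces of $A$ (relative to $\langle\cdot,\cdot\rangle$) with eigenvalues $\lambda_1<\cdots<\lambda_r$. The Codazzi tensor field $A$ is called essential if $\nabla A \neq 0$ and none of the eigenspaces $\mathfrak{m}_i$ is an ideal of $(\mathfrak{m},[\cdot,\cdot]_{\mathfrak{m}})$. A non-associative algebra $\mathfrak{a}$ is nilpotent if there is a positive integer $t$ such that every product of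 $t$ elements of $\mathfrak{a}$, however associated, vanishes; it is split-solvable if there is a chain $\mathfrak{a} = \mathfrak{a}_0 \supseteq \cdots \supseteq \mathfrak{a}_p = 0$ of ideals of $\mathfrak{a}$ with $\dim(\mathfrak{a}_i/\mathfrak{a}_{i+1}) = 1$ for all $i$. *)

theory Defs
  imports "HOL-Analysis.Analysis"
begin

text \<open>Algebraic (infinitesimal) model of a reductive homogeneous space G/H.
  The Lie algebra g of G is a finite-dimensional real vector space of type 'v
  (class euclidean_space is used only to get finite dimension; its inner product
  plays no role) with Lie bracket br; h and m are subspaces of g.\<close>

definition lie_bracket :: "('v::real_vector \<Rightarrow> 'v \<Rightarrow> 'v) \<Rightarrow> bool" where
  "lie_bracket br \<longleftrightarrow> bilinear br \<and> (\<forall>x. br x x = 0) \<and>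
     (\<forall>x y z. br x (br y z) + br y (br z x) + br z (br x y) = 0)"

text \<open>Reductive decomposition g = h + m (direct sum), h a subalgebra, [h,m] in m
  (the infinitesimal form of Ad(H)-invariance of m).\<close>
definition reductive_decomp :: "('v::real_vector \<Rightarrow> 'v \<Rightarrow> 'v) \<Rightarrow> 'v set \<Rightarrow> 'v set \<Rightarrow> bool" where
  "reductive_decomp br h m \<longleftrightarrow> subspace h \<and> subspace m \<and> h \<inter> m = {0} \<and>
     (\<forall>x. \<exists>a\<in>h. \<exists>b\<in>m. x = a + b) \<and>
     (\<forall>a\<in>h. \<forall>b\<in>h. br a b \<in> h) \<and> (\<forall>a\<in>h. \<forall>b\<in>m. br a b \<in> m)"

definition mcomp :: "'v::real_vector set \<Rightarrow> 'v set \<Rightarrow> 'v \<Rightarrow> 'v" where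
  "mcomp h m x = (THE b. b \<in> m \<and> x - b \<in> h)"

definition brm :: "('v::real_vector \<Rightarrow> 'v \<Rightarrow> 'v) \<Rightarrow> 'v set \<Rightarrow> 'v set \<Rightarrow> 'v \<Rightarrow> 'v \<Rightarrow> 'v" where
  "brm br h m x y = mcomp h m (br x y)"

text \<open>A G-invariant Riemannian metric on G/H: an Ad(H)-invariant (here: ad(h)-invariant)
  inner product on m.\<close>
definition invariant_metric ::
  "('v::real_vector \<Rightarrow> 'v \<Rightarrow> 'v) \<Rightarrow> 'v set \<Rightarrow> 'v set \<Rightarrow> ('v \<Rightarrow> 'v \<Rightarrow> real) \<Rightarrow> bool" where
  "invariant_metric br h m ip \<longleftrightarrow> bilinear ip \<and>
     (\<forall>x\<in>m. \<forall>y\<in>m. ip x y = ip y x) \<and> (\<forall>x\<in>m. x \<noteq> 0 \<longrightarrow> ip x x > 0) \<and>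
     (\<forall>z\<in>h. \<forall>x\<in>m. \<forall>y\<in>m. ip (br z x) y + ip x (br z y) = 0)"

text \<open>A G-invariant symmetric twice-covariant tensor field on G/H: an ad(h)-invariant
  symmetric bilinear form on m.\<close>
definition invariant_sym_tensor ::
  "('v::real_vector \<Rightarrow> 'v \<Rightarrow> 'v) \<Rightarrow> 'v set \<Rightarrow> 'v set \<Rightarrow> ('v \<Rightarrow> 'v \<Rightarrow> real) \<Rightarrow> bool" where
  "invariant_sym_tensor br h m A \<longleftrightarrow> bilinear A \<and>
     (\<forall>x\<in>m. \<forall>y\<in>m. A x y = A y x) \<and>
     (\<forall>z\<in>h. \<forall>x\<in>m. \<forall>y\<in>m. A (br z x) y + A x (br z y) = 0)"

definition nomizu_U ::
  "('v::real_vector \<Rightarrow> 'v \<Rightarrow> 'v) \<Rightarrow> 'v set \<Rightarrow> 'v set \<Rightarrow> ('v \<Rightarrow> 'v \<Rightarrow> real) \<Rightarrow> 'v \<Rightarrow> 'v \<Rightarrow> 'v" where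
  "nomizu_U br h m ip x y = (THE u. u \<in> m \<and> (\<forall>z\<in>m.
      ip u z = (ip (brm br h m z x) y + ip x (brm br h m z y)) / 2))"

text \<open>Nomizu map of the Levi-Civita connection at the origin eH:
  Lambda(X)Y = 1/2 [X,Y]_m + U(X,Y).\<close>
definition lc_Lambda ::
  "('v::real_vector \<Rightarrow> 'v \<Rightarrow> 'v) \<Rightarrow> 'v set \<Rightarrow> 'v set \<Rightarrow> ('v \<Rightarrow> 'v \<Rightarrow> real) \<Rightarrow> 'v \<Rightarrow> 'v \<Rightarrow> 'v" where
  "lc_Lambda br h m ip x y = (1/2) *\<^sub>R brm br h m x y + nomizu_U br h m ip x y"

text \<open>Covariant derivative (nabla_X A)(Y,Z) at the origin of a G-invariant tensor A.\<close>
definition cov_deriv ::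
  "('v::real_vector \<Rightarrow> 'v \<Rightarrow> 'v) \<Rightarrow> 'v set \<Rightarrow> 'v set \<Rightarrow> ('v \<Rightarrow> 'v \<Rightarrow> real) \<Rightarrow>
     ('v \<Rightarrow> 'v \<Rightarrow> real) \<Rightarrow> 'v \<Rightarrow> 'v \<Rightarrow> 'v \<Rightarrow> real" where
  "cov_deriv br h m ip A x y z =
     - A (lc_Lambda br h m ip x y) z - A y (lc_Lambda br h m ip x z)"

definition codazzi ::
  "('v::real_vector \<Rightarrow> 'v \<Rightarrow> 'v) \<Rightarrow> 'v set \<Rightarrow> 'v set \<Rightarrow> ('v \<Rightarrow> 'v \<Rightarrow> real) \<Rightarrow> ('v \<Rightarrow> 'v \<Rightarrow> real) \<Rightarrow> bool" where
  "codazzi br h m ip A \<longleftrightarrow> (\<forall>x\<in>m. \<forall>y\<in>m. \<forall>z\<in>m.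
      cov_deriv br h m ip A x y z = cov_deriv br h m ip A y x z)"

definition eigenspace_rel :: "'v::real_vector set \<Rightarrow> ('v \<Rightarrow> 'v \<Rightarrow> real) \<Rightarrow> ('v \<Rightarrow> 'v \<Rightarrow> real) \<Rightarrow> real \<Rightarrow> 'v set" where
  "eigenspace_rel m ip A lam = {x \<in> m. \<forall>y\<in>m. A x y = lam * ip x y}"

definition is_eigenvalue_rel :: "'v::real_vector set \<Rightarrow> ('v \<Rightarrow> 'v \<Rightarrow> real) \<Rightarrow> ('v \<Rightarrow> 'v \<Rightarrow> real) \<Rightarrow> real \<Rightarrow> bool" where
  "is_eigenvalue_rel m ip A lam \<longleftrightarrow> eigenspace_rel m ip A lam \<noteq> {0}"

definition alg_ideal :: "'v::real_vector set \<Rightarrow> ('v \<Rightarrow> 'v \<Rightarrow> 'v) \<Rightarrow> 'v set \<Rightarrow> bool" where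
  "alg_ideal m mul V \<longleftrightarrow> subspace V \<and> V \<subseteq> m \<and>
     (\<forall>x\<in>m. \<forall>v\<in>V. mul x v \<in> V \<and> mul v x \<in> V)"

definition essential_codazzi ::
  "('v::real_vector \<Rightarrow> 'v \<Rightarrow> 'v) \<Rightarrow> 'v set \<Rightarrow> 'v set \<Rightarrow> ('v \<Rightarrow> 'v \<Rightarrow> real) \<Rightarrow> ('v \<Rightarrow> 'v \<Rightarrow> real) \<Rightarrow> bool" where
  "essential_codazzi br h m ip A \<longleftrightarrow> codazzi br h m ip A \<and>
     (\<exists>x\<in>m. \<exists>y\<in>m. \<exists>z\<in>m. cov_deriv br h m ip A x y z \<noteq> 0) \<and>
     (\<forall>lam. is_eigenvalue_rel m ip A lam \<longrightarrow>
        \<not> alg_ideal m (brm br h m) (eigenspace_rel m ip A lam))"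

inductive prod_of :: "'v set \<Rightarrow> ('v \<Rightarrow> 'v \<Rightarrow> 'v) \<Rightarrow> nat \<Rightarrow> 'v \<Rightarrow> bool"
  for m mul where
  single: "x \<in> m \<Longrightarrow> prod_of m mul 1 x"
| mult: "prod_of m mul i x \<Longrightarrow> prod_of m mul j y \<Longrightarrow> prod_of m mul (i + j) (mul x y)"

definition nilpotent_alg :: "'v::real_vector set \<Rightarrow> ('v \<Rightarrow> 'v \<Rightarrow> 'v) \<Rightarrow> bool" where
  "nilpotent_alg m mul \<longleftrightarrow> (\<exists>t::nat. t > 0 \<and> (\<forall>x. prod_of m mul t x \<longrightarrow> x = 0))"

definition split_solvable_alg :: "'v::real_vector set \<Rightarrow> ('v \<Rightarrow> 'v \<Rightarrow> 'v) \<Rightarrow> bool" where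
  "split_solvable_alg m mul \<longleftrightarrow> (\<exists>(a::nat \<Rightarrow> 'v set) p. a 0 = m \<and> a p = {0} \<and>
     (\<forall>i\<le>p. alg_ideal m mul (a i)) \<and>
     (\<forall>i<p. a (Suc i) \<subseteq> a i \<and> dim (a i) = dim (a (Suc i)) + 1))"

end

theory Submission
  imports Defs
begin

text \<open>Let Aop be the self-adjoint endomorphism of m representing A, let x be an eigenvector of Aop
  with eigenvalue a, and put T = Aop - a. Evaluated on an eigenbasis of Aop, the Codazzi equation implies
  that [x, _]_m is skew-symmetric for the positive semidefinite form (u, v) \<mapsto> <T u, T v>.
  A map that is skew for such a form and is nilpotent, or preserves a complete flag of subspaces, is
  null for it, so T [x, u]_m = 0 for all u: the eigenspace of a is stable under [x, _]_m. Hence if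
  (m, [_, _]_m) is nilpotent or split-solvable, every eigenspace of A is an ideal, which an essential
  Codazzi tensor forbids (m \<noteq> 0 because \<nabla>A \<noteq> 0).\<close>

section \<open>Linear algebra\<close>

lemma linear_coeff_zero_if_quadratic_nonpos:
  fixes D E :: real
  assumes "\<And>t. 2*t*D + t^2*E \<le> 0"
  shows "D = 0"
proof (rule ccontr)
  assume "D \<noteq> 0"
  define t where "t = D / (\<bar>E\<bar> + 1)"
  have t: "t * (\<bar>E\<bar> + 1) = D"
    unfolding t_def by (simp add: add_pos_nonneg)
  have "(2*t*D + t^2*E) * (\<bar>E\<bar>+1)^2 = 2*D*(t*(\<bar>E\<bar>+1))*(\<bar>E\<bar>+1) + (t*(\<bar>E\<bar>+1))^2*E"
    by (simp add: power2_eq_square algebra_simps)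
  also have "\<dots> = D^2 * (2*\<bar>E\<bar> + 2 + E)"
    unfolding t by (simp add: power2_eq_square algebra_simps)
  finally have "(2*t*D + t^2*E) * (\<bar>E\<bar>+1)^2 = D^2 * (2*\<bar>E\<bar> + 2 + E)" .
  moreover have "(2*t*D + t^2*E) * (\<bar>E\<bar>+1)^2 \<le> 0"
    using assms[of t] by (simp add: mult_nonpos_nonneg)
  moreover have "D^2 * (2*\<bar>E\<bar> + 2 + E) > 0"
    using \<open>D \<noteq> 0\<close> by (intro mult_pos_pos) (auto simp: abs_if)
  ultimately show False by linarith
qed

definition skew_on :: "'v set \<Rightarrow> ('v \<Rightarrow> 'v \<Rightarrow> real) \<Rightarrow> ('v \<Rightarrow> 'v) \<Rightarrow> bool" where
  "skew_on V q L \<longleftrightarrow> (\<forall>u\<in>V. \<forall>v\<in>V. q (L u) v + q u (L v) = 0)"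

lemma funpow_in:
  assumes "\<forall>u\<in>V. L u \<in> V" "u \<in> V"
  shows "(L ^^ k) u \<in> V"
  using assms by (induction k) auto

lemma skew_on_funpow:
  assumes skew: "skew_on V q L" and L: "\<forall>u\<in>V. L u \<in> V" and "u \<in> V" "v \<in> V"
  shows "q ((L ^^ k) u) v = (-1) ^ k * q u ((L ^^ k) v)"
  using \<open>v \<in> V\<close>
proof (induction k arbitrary: v)
  case 0
  then show ?case by simp
next
  case (Suc k)
  have "q ((L ^^ Suc k) u) v = - q ((L ^^ k) u) (L v)"
    using skew funpow_in[OF L \<open>u \<in> V\<close>] Suc.prems unfolding skew_on_def
    by (simp add: eq_neg_iff_add_eq_0)
  also have "\<dots> = - ((-1) ^ k * q u ((L ^^ k) (L v)))"
    using Suc L by simp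
  finally show ?case by (simp add: funpow_swap1)
qed

lemma subspace_codim_one:
  fixes V W :: "'a::euclidean_space set"
  assumes "subspace V" "subspace W" "V \<subseteq> W" "dim W = dim V + 1"
  obtains e where "e \<in> W" "\<And>u. u \<in> W \<Longrightarrow> \<exists>s. u - s *\<^sub>R e \<in> V"
proof -
  have "\<not> W \<subseteq> V"
  proof
    assume "W \<subseteq> V"
    then have "V = W" using assms(3) by blast
    then show False using assms(4) by simp
  qed
  then obtain e where e: "e \<in> W" "e \<notin> V" by blast
  have spans: "span V = V" "span W = W"
    using assms(1,2) by (simp_all add: span_eq_iff)
  have "span (insert e V) = span W"
  proof (rule dim_eq_span)
    show "insert e V \<subseteq> W" using e assms(3) by blast
    show "dim W \<le> dim (insert e V)" using e assms(4) by (simp add: dim_insert spans)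
  qed
  then have "W = {u. \<exists>s. u - s *\<^sub>R e \<in> V}"
    unfolding span_insert spans by blast
  then show ?thesis using that e by blast
qed

lemma subspace_eigenspace_rel:
  assumes "subspace m" "bilinear ip" "bilinear A"
  shows "subspace (eigenspace_rel m ip A a)"
  using assms unfolding subspace_def eigenspace_rel_def
  by (simp add: bilinear_ladd bilinear_lmul bilinear_lzero algebra_simps)

lemma prod_of_funpow:
  assumes "x \<in> m" "u \<in> m"
  shows "prod_of m mul (Suc k) ((mul x ^^ k) u)"
proof (induction k)
  case 0
  then show ?case using prod_of.single[OF assms(2)] by simp
next
  case (Suc k)
  from prod_of.mult[OF prod_of.single[OF assms(1)] Suc] show ?case by simp
qed

section \<open>Inner products on a subspace\<close>

locale inner_product_on =
  fixes m :: "'v::euclidean_space set" and ip :: "'v \<Rightarrow> 'v \<Rightarrow> real"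
  assumes m_subspace: "subspace m"
    and ip_bilinear: "bilinear ip"
    and ip_sym: "x \<in> m \<Longrightarrow> y \<in> m \<Longrightarrow> ip x y = ip y x"
    and ip_pos: "x \<in> m \<Longrightarrow> x \<noteq> 0 \<Longrightarrow> ip x x > 0"
begin

lemma inner_product_on_subspace:
  assumes "subspace V" "V \<subseteq> m"
  shows "inner_product_on V ip"
  using assms ip_bilinear ip_sym ip_pos by unfold_locales (auto simp: subset_iff)

lemma ip_self_eq_0_iff: "x \<in> m \<Longrightarrow> ip x x = 0 \<longleftrightarrow> x = 0"
  using ip_pos[of x] bilinear_lzero[OF ip_bilinear] by fastforce

lemma rayleigh_max_eigenvector:
  assumes "m \<noteq> {0}" and F: "bilinear F" and F_sym: "\<And>x y. x \<in> m \<Longrightarrow> y \<in> m \<Longrightarrow> F x y = F y x"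
  shows "\<exists>x0\<in>m. x0 \<noteq> 0 \<and> (\<exists>lam. (\<forall>y\<in>m. F x0 y = lam * ip x0 y) \<and> (\<forall>y\<in>m. F y y \<le> lam * ip y y))"
proof -
  define K where "K = m \<inter> sphere 0 1"
  define g where "g x = F x x / ip x x" for x
  have "compact K"
    unfolding K_def using closed_subspace[OF m_subspace] by (simp add: closed_Int_compact)
  moreover obtain v where "v \<in> m" "v \<noteq> 0"
    using assms(1) m_subspace subspace_0 by blast
  then have "(1 / norm v) *\<^sub>R v \<in> K"
    unfolding K_def by (simp add: subspace_scale[OF m_subspace])
  then have "K \<noteq> {}" by blast
  moreover have "continuous_on K g"
    unfolding g_def K_def using ip_pos
    by (intro continuous_on_divide bilinear_continuous_on_compose[OF continuous_on_id continuous_on_id]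
        F ip_bilinear) fastforce
  ultimately obtain x0 where x0: "x0 \<in> K" and x0_max: "\<And>y. y \<in> K \<Longrightarrow> g y \<le> g x0"
    using continuous_attains_sup by metis
  define lam where "lam = g x0"
  have x0m: "x0 \<in> m" and "x0 \<noteq> 0" using x0 unfolding K_def by auto
  then have F00: "F x0 x0 = lam * ip x0 x0"
    unfolding lam_def g_def using ip_pos[OF x0m \<open>x0 \<noteq> 0\<close>] by simp
  have le: "F y y \<le> lam * ip y y" if "y \<in> m" for y
  proof (cases "y = 0")
    case True
    then show ?thesis using bilinear_lzero[OF F] bilinear_lzero[OF ip_bilinear] by simp
  next
    case False
    define c where "c = 1 / norm y"
    have "c *\<^sub>R y \<in> K"
      unfolding K_def c_def using \<open>y \<in> m\<close> False by (simp add: subspace_scale[OF m_subspace])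
    then have "g (c *\<^sub>R y) \<le> lam" using x0_max lam_def by blast
    moreover have "g (c *\<^sub>R y) = F y y / ip y y"
      unfolding g_def c_def using False
      by (simp add: bilinear_lmul[OF F] bilinear_rmul[OF F] bilinear_lmul[OF ip_bilinear] bilinear_rmul[OF ip_bilinear])
    ultimately show ?thesis using ip_pos[OF \<open>y \<in> m\<close> False] by (simp add: divide_le_eq)
  qed
  have "F x0 y = lam * ip x0 y" if "y \<in> m" for y
  proof -
    have "2*t*(F x0 y - lam * ip x0 y) + t^2*(F y y - lam * ip y y) \<le> 0" for t
    proof -
      have "x0 + t *\<^sub>R y \<in> m"
        using x0m \<open>y \<in> m\<close> by (simp add: subspace_add subspace_scale m_subspace)
      then have "F (x0 + t *\<^sub>R y) (x0 + t *\<^sub>R y) \<le> lam * ip (x0 + t *\<^sub>R y) (x0 + t *\<^sub>R y)"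
        by (rule le)
      then show ?thesis
        using F00 F_sym[OF x0m \<open>y \<in> m\<close>] ip_sym[OF x0m \<open>y \<in> m\<close>]
        by (simp add: bilinear_ladd[OF F] bilinear_radd[OF F] bilinear_lmul[OF F] bilinear_rmul[OF F]
            bilinear_ladd[OF ip_bilinear] bilinear_radd[OF ip_bilinear] bilinear_lmul[OF ip_bilinear]
            bilinear_rmul[OF ip_bilinear] power2_eq_square algebra_simps)
    qed
    then show ?thesis using linear_coeff_zero_if_quadratic_nonpos by fastforce
  qed
  then show ?thesis using x0m \<open>x0 \<noteq> 0\<close> le by blast
qed

lemma representer_exists:
  assumes f: "linear f"
  shows "\<exists>u\<in>m. \<forall>w\<in>m. ip u w = f w"
proof (cases "\<forall>w\<in>m. f w = 0")
  case True
  then show ?thesis using subspace_0[OF m_subspace] bilinear_lzero[OF ip_bilinear] by fastforce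
next
  case False
  then obtain y where y: "y \<in> m" "f y \<noteq> 0" by blast
  then have "m \<noteq> {0}" using linear_0[OF f] by auto
  \<comment> \<open>the Rayleigh maximiser of the rank-one form f x * f y is a multiple of the representer\<close>
  moreover have "bilinear (\<lambda>x y. f x * f y)"
    using f by (simp add: bilinear_def linear_iff algebra_simps)
  ultimately obtain x0 lam where x0: "x0 \<in> m" "x0 \<noteq> 0"
    and eig: "\<forall>w\<in>m. f x0 * f w = lam * ip x0 w" and max: "\<forall>w\<in>m. f w * f w \<le> lam * ip w w"
    using rayleigh_max_eigenvector[of "\<lambda>x y. f x * f y"] by auto
  have "y \<noteq> 0" using y linear_0[OF f] by auto
  have "0 < f y * f y" using y by (auto simp: zero_less_mult_iff linorder_neq_iff)
  also have "\<dots> \<le> lam * ip y y" using max y by blast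
  finally have "lam > 0"
    using ip_pos[OF y(1) \<open>y \<noteq> 0\<close>] by (simp add: zero_less_mult_iff)
  then have "f x0 \<noteq> 0" using eig x0 ip_pos[of x0] by fastforce
  then have "\<forall>w\<in>m. ip ((lam / f x0) *\<^sub>R x0) w = f w"
    using eig by (simp add: bilinear_lmul[OF ip_bilinear] field_simps)
  then show ?thesis using x0 subspace_scale[OF m_subspace] by blast
qed

lemma representer_unique:
  assumes "u \<in> m" "\<forall>w\<in>m. ip u w = f w" "v \<in> m" "\<forall>w\<in>m. ip v w = f w"
  shows "u = v"
proof -
  have "u - v \<in> m" using assms subspace_diff[OF m_subspace] by blast
  moreover have "ip (u - v) (u - v) = 0" using assms calculation by (simp add: bilinear_lsub[OF ip_bilinear])
  ultimately show ?thesis using ip_pos by fastforce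
qed

definition representer :: "('v \<Rightarrow> real) \<Rightarrow> 'v" where
  "representer f = (THE u. u \<in> m \<and> (\<forall>w\<in>m. ip u w = f w))"

lemma representer:
  assumes "linear f"
  shows "representer f \<in> m" "\<forall>w\<in>m. ip (representer f) w = f w"
proof -
  have "\<exists>!u. u \<in> m \<and> (\<forall>w\<in>m. ip u w = f w)"
    using representer_exists[OF assms] representer_unique by blast
  from theI'[OF this] show "representer f \<in> m" "\<forall>w\<in>m. ip (representer f) w = f w"
    unfolding representer_def by blast+
qed

lemma representer_eq:
  assumes "linear f" "u \<in> m" "\<forall>w\<in>m. ip u w = f w"
  shows "representer f = u"
  using representer_unique representer[OF assms(1)] assms(2,3) by blast

lemma nilpotent_skew_null:
  assumes L: "\<forall>u\<in>m. L u \<in> m" and T: "\<forall>u\<in>m. T u \<in> m" "linear T"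
    and skew: "skew_on m (\<lambda>u v. ip (T u) (T v)) L"
    and nil: "\<forall>u\<in>m. (L ^^ n) u = 0"
  shows "\<forall>u\<in>m. T (L u) = 0"
proof -
  define Q where "Q k \<longleftrightarrow> (\<forall>u\<in>m. T ((L ^^ k) u) = 0)" for k
  have mono: "Q (k + j)" if "Q k" for k j
    unfolding Q_def
  proof
    fix u assume "u \<in> m"
    have "(L ^^ (k + j)) u = (L ^^ k) ((L ^^ j) u)" by (simp add: funpow_add)
    then show "T ((L ^^ (k + j)) u) = 0"
      using that funpow_in[OF L \<open>u \<in> m\<close>] unfolding Q_def by simp
  qed
  \<comment> \<open>|T L^k u|^2 = \<plusminus><T u, T L^(2k) u>, so the nilpotency index can be halved\<close>
  have half: "Q k" if "Q (2 * k)" for k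
    unfolding Q_def
  proof
    fix u assume "u \<in> m"
    have "ip (T ((L ^^ k) u)) (T ((L ^^ k) u)) = (-1) ^ k * ip (T u) (T ((L ^^ k) ((L ^^ k) u)))"
      using skew_on_funpow[OF skew L \<open>u \<in> m\<close> funpow_in[OF L \<open>u \<in> m\<close>]] .
    also have "(L ^^ k) ((L ^^ k) u) = (L ^^ (2 * k)) u" by (simp add: funpow_add mult_2)
    also have "T \<dots> = 0" using that \<open>u \<in> m\<close> unfolding Q_def by blast
    finally have "ip (T ((L ^^ k) u)) (T ((L ^^ k) u)) = 0" by (simp add: bilinear_rzero[OF ip_bilinear])
    then show "T ((L ^^ k) u) = 0" using ip_self_eq_0_iff T(1) funpow_in[OF L \<open>u \<in> m\<close>] by blast
  qed
  have descend: "Q 1" if "Q (Suc j)" for j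
    using that
  proof (induction j)
    case (Suc j)
    have "Q (Suc (Suc j) + j)" using mono Suc.prems by blast
    then have "Q (2 * Suc j)" by (simp add: mult_2)
    then show ?case using half Suc.IH by blast
  qed simp
  have "Q n" using nil linear_0[OF T(2)] unfolding Q_def by simp
  then have "Q 1" using descend mono[of n 1] by simp
  then show ?thesis unfolding Q_def by simp
qed

lemma flag_skew_null:
  assumes L: "linear L" and T: "\<forall>u\<in>m. T u \<in> m" "linear T"
    and skew: "skew_on m (\<lambda>u v. ip (T u) (T v)) L"
    and flag: "a 0 = m" "a p = {0}"
      "\<forall>i\<le>p. subspace (a i) \<and> a i \<subseteq> m \<and> (\<forall>v\<in>a i. L v \<in> a i)"
      "\<forall>i<p. a (Suc i) \<subseteq> a i \<and> dim (a i) = dim (a (Suc i)) + 1"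
  shows "\<forall>u\<in>m. T (L u) = 0"
proof -
  define R where "R i \<longleftrightarrow> (\<forall>u\<in>a i. T (L u) = 0)" for i
  have step: "R i" if "i < p" and R_Suc: "R (Suc i)" for i
  proof -
    have ai: "subspace (a i)" "a i \<subseteq> m" "\<forall>v\<in>a i. L v \<in> a i"
      and "subspace (a (Suc i))" "a (Suc i) \<subseteq> a i" "dim (a i) = dim (a (Suc i)) + 1"
      using flag(3,4) \<open>i < p\<close> by auto
    then obtain e where e: "e \<in> a i" and split: "\<And>u. u \<in> a i \<Longrightarrow> \<exists>s. u - s *\<^sub>R e \<in> a (Suc i)"
      using subspace_codim_one by metis
    \<comment> \<open>L e = s e + w with w \<in> a (Suc i); skewness makes T (L e) orthogonal to T e and T w\<close>
    obtain s where w: "L e - s *\<^sub>R e \<in> a (Suc i)" using split ai(3) e by blast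
    have "e \<in> m" "L e \<in> m" "L e - s *\<^sub>R e \<in> m" using e w ai \<open>a (Suc i) \<subseteq> a i\<close> by auto
    then have "ip (T (L e)) (T e) + ip (T e) (T (L e)) = 0"
      and "ip (T (L e)) (T (L e - s *\<^sub>R e)) + ip (T e) (T (L (L e - s *\<^sub>R e))) = 0"
      using skew unfolding skew_on_def by auto
    moreover have "ip (T e) (T (L e)) = ip (T (L e)) (T e)"
      using ip_sym T(1) \<open>e \<in> m\<close> \<open>L e \<in> m\<close> by blast
    moreover have "T (L (L e - s *\<^sub>R e)) = 0" using R_Suc w unfolding R_def by blast
    ultimately have "ip (T (L e)) (T (L e)) = 0"
      by (simp add: linear_diff[OF T(2)] linear_scale[OF T(2)] bilinear_rsub[OF ip_bilinear]
          bilinear_rmul[OF ip_bilinear] bilinear_rzero[OF ip_bilinear])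
    then have Le: "T (L e) = 0" using ip_self_eq_0_iff T(1) \<open>L e \<in> m\<close> by blast
    show "R i" unfolding R_def
    proof
      fix u assume "u \<in> a i"
      then obtain s' where "u - s' *\<^sub>R e \<in> a (Suc i)" using split by blast
      then have "T (L (u - s' *\<^sub>R e)) = 0" using R_Suc unfolding R_def by blast
      then show "T (L u) = 0" using Le by (simp add: linear_diff[OF L] linear_scale[OF L]
          linear_diff[OF T(2)] linear_scale[OF T(2)])
    qed
  qed
  have "R p" unfolding R_def using flag(2) L T(2) by (simp add: linear_0)
  then have "R 0" using inc_induct[of 0 p R] step by blast
  then show ?thesis unfolding R_def flag(1) .
qed

end

lemma (in inner_product_on) eigenvectors_span:
  assumes F: "bilinear F" and F_sym: "\<And>x y. x \<in> m \<Longrightarrow> y \<in> m \<Longrightarrow> F x y = F y x"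
  shows "m \<subseteq> span (\<Union>lam. eigenspace_rel m ip F lam)"
  using inner_product_on_axioms F_sym
proof (induction "dim m" arbitrary: m rule: less_induct)
  case less
  interpret V: inner_product_on m ip by (fact less.prems(1))
  show ?case
  proof (cases "m = {0}")
    case True
    then show ?thesis by (simp add: span_0)
  next
    case False
    obtain x0 lam where x0: "x0 \<in> m" "x0 \<noteq> 0" and x0_eig: "\<forall>y\<in>m. F x0 y = lam * ip x0 y"
      using V.rayleigh_max_eigenvector[OF False F less.prems(2)] by blast
    define m' where "m' = {y\<in>m. ip x0 y = 0}"
    have "subspace m'"
      unfolding m'_def subspace_def using V.m_subspace
      by (simp add: subspace_0 subspace_add subspace_scale bilinear_radd[OF V.ip_bilinear]
          bilinear_rmul[OF V.ip_bilinear] bilinear_rzero[OF V.ip_bilinear])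
    moreover have "m' \<subseteq> m" unfolding m'_def by auto
    moreover have "dim m' < dim m"
    proof (rule dim_psubset)
      have "x0 \<notin> m'" unfolding m'_def using V.ip_pos x0 by fastforce
      moreover have spans: "span m' = m'" "span m = m"
        using \<open>subspace m'\<close> V.m_subspace by (simp_all add: span_eq_iff)
      ultimately show "span m' \<subset> span m" unfolding spans using \<open>m' \<subseteq> m\<close> x0 by auto
    qed
    ultimately have IH: "m' \<subseteq> span (\<Union>lam. eigenspace_rel m' ip F lam)"
      using less.hyps V.inner_product_on_subspace less.prems(2) by blast
    have proj: "w - (ip x0 w / ip x0 x0) *\<^sub>R x0 \<in> m'" if "w \<in> m" for w
      unfolding m'_def using that x0 V.ip_pos[OF x0]
      by (simp add: V.m_subspace subspace_diff subspace_scale bilinear_rsub[OF V.ip_bilinear]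
          bilinear_rmul[OF V.ip_bilinear])
    have "eigenspace_rel m' ip F mu \<subseteq> eigenspace_rel m ip F mu" for mu
    proof
      fix x assume "x \<in> eigenspace_rel m' ip F mu"
      then have x: "x \<in> m" "ip x0 x = 0" and x_eig: "\<forall>w\<in>m'. F x w = mu * ip x w"
        unfolding eigenspace_rel_def m'_def by auto
      have "F x x0 = 0" "ip x x0 = 0"
        using x x0 x0_eig less.prems(2) V.ip_sym by auto
      have "F x w = mu * ip x w" if "w \<in> m" for w
        using x_eig[rule_format, OF proj[OF that]] \<open>ip x x0 = 0\<close> \<open>F x x0 = 0\<close>
        by (simp add: bilinear_rsub[OF V.ip_bilinear] bilinear_rmul[OF V.ip_bilinear]
            bilinear_rsub[OF F] bilinear_rmul[OF F])
      then show "x \<in> eigenspace_rel m ip F mu" unfolding eigenspace_rel_def using x by blast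
    qed
    then have "(\<Union>lam. eigenspace_rel m' ip F lam) \<subseteq> (\<Union>lam. eigenspace_rel m ip F lam)"
      by blast
    then have m'_span: "m' \<subseteq> span (\<Union>lam. eigenspace_rel m ip F lam)"
      using IH span_mono by blast
    have x0_span: "x0 \<in> span (\<Union>lam. eigenspace_rel m ip F lam)"
      using x0 x0_eig by (intro span_base) (auto simp: eigenspace_rel_def)
    show ?thesis
    proof
      fix w assume "w \<in> m"
      let ?c = "ip x0 w / ip x0 x0"
      have "(w - ?c *\<^sub>R x0) + ?c *\<^sub>R x0 \<in> span (\<Union>lam. eigenspace_rel m ip F lam)"
        using proj[OF \<open>w \<in> m\<close>] m'_span x0_span by (intro span_add span_scale) auto
      then show "w \<in> span (\<Union>lam. eigenspace_rel m ip F lam)" by simp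
    qed
  qed
qed

section \<open>Codazzi tensors on a reductive homogeneous space\<close>

locale reductive_codazzi = inner_product_on m ip
  for m :: "'v::euclidean_space set" and ip :: "'v \<Rightarrow> 'v \<Rightarrow> real" +
  fixes br :: "'v \<Rightarrow> 'v \<Rightarrow> 'v" and h :: "'v set" and A :: "'v \<Rightarrow> 'v \<Rightarrow> real"
  assumes br_bilinear: "bilinear br" and br_self: "br x x = 0"
    and h_subspace: "subspace h" and h_inter_m: "h \<inter> m = {0}"
    and h_plus_m: "\<exists>a\<in>h. \<exists>b\<in>m. x = a + b"
    and A_bilinear: "bilinear A" and A_sym: "x \<in> m \<Longrightarrow> y \<in> m \<Longrightarrow> A x y = A y x"
    and codazzi: "codazzi br h m ip A"
begin

lemma mcomp_ex1: "\<exists>!b. b \<in> m \<and> x - b \<in> h"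
proof -
  obtain a b where ab: "a \<in> h" "b \<in> m" "x = a + b" using h_plus_m by blast
  show ?thesis
  proof (rule ex1I[of _ b])
    show "b \<in> m \<and> x - b \<in> h" using ab by simp
    fix b' assume b': "b' \<in> m \<and> x - b' \<in> h"
    have "b' - b \<in> m" using b' ab subspace_diff[OF m_subspace] by blast
    moreover have "x - b \<in> h" using ab by simp
    then have "(x - b) - (x - b') \<in> h" using b' subspace_diff[OF h_subspace] by blast
    then have "b' - b \<in> h" by simp
    ultimately have "b' - b \<in> h \<inter> m" by blast
    then show "b' = b" using h_inter_m by simp
  qed
qed

lemma mcomp: "mcomp h m x \<in> m" "x - mcomp h m x \<in> h"
  using theI'[OF mcomp_ex1[of x]] unfolding mcomp_def by blast+

lemma mcomp_eq: "b \<in> m \<Longrightarrow> x - b \<in> h \<Longrightarrow> mcomp h m x = b"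
  using mcomp_ex1[of x] mcomp[of x] by blast

lemma linear_mcomp: "linear (mcomp h m)"
proof (rule linearI)
  fix x y
  have "mcomp h m x + mcomp h m y \<in> m"
    using mcomp(1) subspace_add[OF m_subspace] by blast
  moreover have "x + y - (mcomp h m x + mcomp h m y) = (x - mcomp h m x) + (y - mcomp h m y)"
    by simp
  then have "x + y - (mcomp h m x + mcomp h m y) \<in> h"
    using mcomp(2) subspace_add[OF h_subspace] by metis
  ultimately show "mcomp h m (x + y) = mcomp h m x + mcomp h m y"
    by (rule mcomp_eq)
next
  fix c :: real and x
  have "c *\<^sub>R mcomp h m x \<in> m"
    using mcomp(1) subspace_scale[OF m_subspace] by blast
  moreover have "c *\<^sub>R x - c *\<^sub>R mcomp h m x = c *\<^sub>R (x - mcomp h m x)"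
    by (simp add: scale_right_diff_distrib)
  then have "c *\<^sub>R x - c *\<^sub>R mcomp h m x \<in> h"
    using mcomp(2) subspace_scale[OF h_subspace] by metis
  ultimately show "mcomp h m (c *\<^sub>R x) = c *\<^sub>R mcomp h m x"
    by (rule mcomp_eq)
qed

abbreviation bm :: "'v \<Rightarrow> 'v \<Rightarrow> 'v" where
  "bm \<equiv> brm br h m"

lemma bilinear_bm: "bilinear bm"
proof -
  have "linear (\<lambda>y. br x y)" "linear (\<lambda>x. br x y)" for x y
    using br_bilinear by (simp_all add: bilinear_def)
  then show ?thesis
    unfolding bilinear_def brm_def using linear_compose[OF _ linear_mcomp, unfolded o_def] by blast
qed

lemma bm_in: "bm x y \<in> m"
  unfolding brm_def by (rule mcomp)

lemma linear_bm_left: "linear (bm x)"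
  using bilinear_bm by (simp add: bilinear_def)

lemma bm_anticomm: "bm y x = - bm x y"
proof -
  have "br (x + y) (x + y) = 0" "br x x = 0" "br y y = 0" by (fact br_self)+
  then have "br y x + br x y = 0"
    by (simp add: bilinear_ladd[OF br_bilinear] bilinear_radd[OF br_bilinear])
  then have "br y x = - br x y" by (simp add: eq_neg_iff_add_eq_0)
  then show ?thesis unfolding brm_def using linear_mcomp by (simp add: linear_neg)
qed

lemma ip_bm_anticomm: "ip (bm y x) z = - ip (bm x y) z"
  by (simp add: bm_anticomm[of y x] bilinear_lneg[OF ip_bilinear])

abbreviation eigsp :: "real \<Rightarrow> 'v set" where
  "eigsp a \<equiv> eigenspace_rel m ip A a"

definition Aop :: "'v \<Rightarrow> 'v" where
  "Aop u = representer (A u)"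

lemma Aop: "Aop u \<in> m" "w \<in> m \<Longrightarrow> ip (Aop u) w = A u w"
  using representer[of "A u"] A_bilinear unfolding Aop_def bilinear_def by auto

lemma linear_Aop: "linear Aop"
proof (rule linearI)
  fix x y
  have "linear (A (x + y))" using A_bilinear by (simp add: bilinear_def)
  then show "Aop (x + y) = Aop x + Aop y"
    unfolding Aop_def[of "x + y"] using Aop subspace_add[OF m_subspace]
    by (intro representer_eq) (simp_all add: bilinear_ladd[OF ip_bilinear] bilinear_ladd[OF A_bilinear])
next
  fix c :: real and x
  have "linear (A (c *\<^sub>R x))" using A_bilinear by (simp add: bilinear_def)
  then show "Aop (c *\<^sub>R x) = c *\<^sub>R Aop x"
    unfolding Aop_def[of "c *\<^sub>R x"] using Aop subspace_scale[OF m_subspace]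
    by (intro representer_eq) (simp_all add: bilinear_lmul[OF ip_bilinear] bilinear_lmul[OF A_bilinear])
qed

lemma Aop_eigen: "x \<in> eigsp a \<Longrightarrow> Aop x = a *\<^sub>R x"
  unfolding eigenspace_rel_def Aop_def using A_bilinear subspace_scale[OF m_subspace]
  by (intro representer_eq) (auto simp: bilinear_def bilinear_lmul[OF ip_bilinear])

lemma shifted_Aop_in: "w \<in> m \<Longrightarrow> Aop w - a *\<^sub>R w \<in> m"
  using Aop(1) subspace_diff[OF m_subspace] subspace_scale[OF m_subspace] by blast

lemma linear_shifted_Aop: "linear (\<lambda>w. Aop w - a *\<^sub>R w)"
  using linear_Aop by (intro linear_compose_sub linear_compose_scale_right linear_ident)

lemma nomizu_U:
  "nomizu_U br h m ip x y \<in> m"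
  "z \<in> m \<Longrightarrow> ip (nomizu_U br h m ip x y) z = (ip (bm z x) y + ip x (bm z y)) / 2"
proof -
  have "linear (\<lambda>z. (ip (bm z x) y + ip x (bm z y)) / 2)"
    by (rule linearI) (simp_all add: bilinear_ladd[OF bilinear_bm] bilinear_lmul[OF bilinear_bm]
        bilinear_ladd[OF ip_bilinear] bilinear_lmul[OF ip_bilinear] bilinear_radd[OF ip_bilinear]
        bilinear_rmul[OF ip_bilinear] field_simps)
  moreover have "nomizu_U br h m ip x y = representer (\<lambda>z. (ip (bm z x) y + ip x (bm z y)) / 2)"
    unfolding nomizu_U_def representer_def ..
  ultimately show "nomizu_U br h m ip x y \<in> m"
    "z \<in> m \<Longrightarrow> ip (nomizu_U br h m ip x y) z = (ip (bm z x) y + ip x (bm z y)) / 2"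
    using representer by auto
qed

definition lc_form :: "'v \<Rightarrow> 'v \<Rightarrow> 'v \<Rightarrow> real" where
  "lc_form x y z = (ip (bm x y) z + ip (bm z x) y + ip (bm z y) x) / 2"

lemma lc_Lambda_in: "lc_Lambda br h m ip x y \<in> m"
  unfolding lc_Lambda_def using bm_in nomizu_U(1) subspace_add[OF m_subspace] subspace_scale[OF m_subspace]
  by blast

lemma ip_lc_Lambda:
  assumes "x \<in> m" "z \<in> m"
  shows "ip (lc_Lambda br h m ip x y) z = lc_form x y z"
proof -
  have "ip (lc_Lambda br h m ip x y) z = ip (bm x y) z / 2 + ip (nomizu_U br h m ip x y) z"
    unfolding lc_Lambda_def by (simp add: bilinear_ladd[OF ip_bilinear] bilinear_lmul[OF ip_bilinear])
  also have "\<dots> = (ip (bm x y) z + ip (bm z x) y + ip (bm z y) x) / 2"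
    using nomizu_U(2)[OF assms(2)] ip_sym[OF assms(1) bm_in] by simp
  finally show ?thesis unfolding lc_form_def .
qed

lemma lc_form_scale3: "lc_form x y (c *\<^sub>R z) = c * lc_form x y z"
  unfolding lc_form_def
  by (simp add: bilinear_lmul[OF bilinear_bm] bilinear_rmul[OF bilinear_bm] bilinear_lmul[OF ip_bilinear]
      bilinear_rmul[OF ip_bilinear] algebra_simps)

lemma lc_form_anti23: "lc_form x z y = - lc_form x y z"
  unfolding lc_form_def using ip_bm_anticomm[of x z y] ip_bm_anticomm[of y z x] ip_bm_anticomm[of x y z]
  by (simp add: field_simps)

abbreviation cov :: "'v \<Rightarrow> 'v \<Rightarrow> 'v \<Rightarrow> real" where
  "cov \<equiv> cov_deriv br h m ip A"

lemma cov_deriv_eq: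
  assumes "x \<in> m" "y \<in> m" "z \<in> m"
  shows "cov x y z = - (lc_form x y (Aop z) + lc_form x z (Aop y))"
proof -
  let ?\<Lambda> = "lc_Lambda br h m ip"
  have "A (?\<Lambda> x y) z = A z (?\<Lambda> x y)" using A_sym lc_Lambda_in assms(3) by blast
  also have "\<dots> = ip (Aop z) (?\<Lambda> x y)" using Aop(2)[OF lc_Lambda_in] by simp
  also have "\<dots> = ip (?\<Lambda> x y) (Aop z)" using ip_sym lc_Lambda_in Aop(1) by blast
  also have "\<dots> = lc_form x y (Aop z)" using ip_lc_Lambda assms(1) Aop(1) by blast
  finally have first: "A (?\<Lambda> x y) z = lc_form x y (Aop z)" .
  have "A y (?\<Lambda> x z) = ip (Aop y) (?\<Lambda> x z)" using Aop(2)[OF lc_Lambda_in] by simp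
  also have "\<dots> = ip (?\<Lambda> x z) (Aop y)" using ip_sym lc_Lambda_in Aop(1) by blast
  also have "\<dots> = lc_form x z (Aop y)" using ip_lc_Lambda assms(1) Aop(1) by blast
  finally have second: "A y (?\<Lambda> x z) = lc_form x z (Aop y)" .
  show ?thesis unfolding cov_deriv_def first second by simp
qed

lemma cov_deriv_swap23:
  assumes "y \<in> m" "z \<in> m"
  shows "cov x y z = cov x z y"
  unfolding cov_deriv_def using A_sym[OF lc_Lambda_in assms(2)] A_sym[OF assms(1) lc_Lambda_in] by simp

lemma cov_deriv_eigen:
  assumes "x \<in> m" "y \<in> eigsp b" "z \<in> eigsp c"
  shows "cov x y z = (b - c) * lc_form x y z"
proof -
  have "y \<in> m" "z \<in> m" using assms(2,3) unfolding eigenspace_rel_def by auto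
  then have "cov x y z = - (c * lc_form x y z + b * lc_form x z y)"
    using cov_deriv_eq[OF assms(1)] Aop_eigen[OF assms(2)] Aop_eigen[OF assms(3)]
    by (simp add: lc_form_scale3)
  then show ?thesis by (simp add: lc_form_anti23[where y = y and z = z] algebra_simps)
qed

lemma codazzi_eigen_identity:
  assumes x: "x \<in> eigsp a" and y: "y \<in> eigsp b" and z: "z \<in> eigsp c"
  shows "(c - a)^2 * ip (bm x y) z + (b - a)^2 * ip (bm x z) y = 0"
proof -
  define P1 P2 P3 where "P1 = ip (bm x y) z" and "P2 = ip (bm x z) y" and "P3 = ip (bm y z) x"
  have "x \<in> m" "y \<in> m" "z \<in> m" using x y z unfolding eigenspace_rel_def by auto
  then have "cov x y z = cov y x z" "cov x z y = cov z x y" "cov x y z = cov x z y"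
    using codazzi cov_deriv_swap23 unfolding codazzi_def by blast+
  moreover have "cov x y z = (b - c) * lc_form x y z" "cov y x z = (a - c) * lc_form y x z"
    "cov z x y = (a - b) * lc_form z x y"
    using cov_deriv_eigen \<open>x \<in> m\<close> \<open>y \<in> m\<close> \<open>z \<in> m\<close> x y z by blast+
  moreover have "lc_form x y z = (P1 - P2 - P3) / 2" "lc_form y x z = (- P1 - P3 - P2) / 2"
    "lc_form z x y = (- P2 + P3 - P1) / 2"
    unfolding lc_form_def P1_def P2_def P3_def
    using ip_bm_anticomm[of x y z] ip_bm_anticomm[of x z y] ip_bm_anticomm[of y z x] by simp_all
  ultimately have "(b - c) * (P1 - P2 - P3) = (a - c) * (- P1 - P3 - P2)"
    "(b - c) * (P1 - P2 - P3) = (a - b) * (- P2 + P3 - P1)"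
    by simp_all
  \<comment> \<open>a linear system in P1, P2, P3; this combination of its two equations eliminates P3\<close>
  then have "(c - a)^2 * P1 + (b - a)^2 * P2 = 0"
    by (simp add: power2_eq_square algebra_simps) algebra
  then show ?thesis unfolding P1_def P2_def .
qed

lemma ip_shifted_eigen:
  assumes "w \<in> m" "z \<in> eigsp c"
  shows "ip (Aop w - a *\<^sub>R w) z = (c - a) * ip w z"
proof -
  have "z \<in> m" "A z w = c * ip z w" using assms unfolding eigenspace_rel_def by auto
  then have "ip (Aop w) z = c * ip w z"
    using Aop(2) A_sym ip_sym assms(1) by metis
  then show ?thesis by (simp add: bilinear_lsub[OF ip_bilinear] bilinear_lmul[OF ip_bilinear] algebra_simps)
qed

lemma skew_shifted_ad:
  assumes x: "x \<in> eigsp a"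
  shows "skew_on m (\<lambda>u v. ip (Aop u - a *\<^sub>R u) (Aop v - a *\<^sub>R v)) (bm x)"
proof -
  define T where "T w = Aop w - a *\<^sub>R w" for w
  define G where "G u v = ip (T (bm x u)) (T v) + ip (T u) (T (bm x v))" for u v
  have "bilinear G"
    using linear_shifted_Aop[of a, folded T_def] linear_bm_left[of x]
    unfolding G_def bilinear_def
    by (auto intro!: linearI simp: linear_add linear_scale bilinear_radd[OF ip_bilinear]
        bilinear_rmul[OF ip_bilinear] bilinear_ladd[OF ip_bilinear] bilinear_lmul[OF ip_bilinear] algebra_simps)
  moreover have "G y z = 0" if "y \<in> eigsp b" "z \<in> eigsp c" for y z b c
  proof -
    have "y \<in> m" "z \<in> m" using that unfolding eigenspace_rel_def by auto
    have "T y = (b - a) *\<^sub>R y" "T z = (c - a) *\<^sub>R z"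
      unfolding T_def using Aop_eigen that by (simp_all add: algebra_simps)
    moreover have "ip (T (bm x y)) z = (c - a) * ip (bm x y) z"
      unfolding T_def using ip_shifted_eigen bm_in that(2) by blast
    moreover have "ip y (T (bm x z)) = (b - a) * ip (bm x z) y"
      unfolding T_def using ip_shifted_eigen bm_in that(1) ip_sym[OF \<open>y \<in> m\<close>] Aop(1)
        subspace_diff[OF m_subspace] subspace_scale[OF m_subspace] by metis
    ultimately have "G y z = (c - a)^2 * ip (bm x y) z + (b - a)^2 * ip (bm x z) y"
      unfolding G_def by (simp add: bilinear_rmul[OF ip_bilinear] bilinear_lmul[OF ip_bilinear] power2_eq_square)
    then show ?thesis using codazzi_eigen_identity[OF x that] by simp
  qed
  moreover have "bilinear (\<lambda>(_::'v) (_::'v). 0::real)" by (simp add: bilinear_def linear_zero)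
  ultimately have "G u v = 0" if "u \<in> m" "v \<in> m" for u v
    using bilinear_eq[of G "\<lambda>_ _. 0", OF _ _ eigenvectors_span[OF A_bilinear A_sym]
        eigenvectors_span[OF A_bilinear A_sym] that] by blast
  then show ?thesis unfolding skew_on_def G_def T_def by blast
qed

lemma eigenspace_ideal_if_shifted_ad_null:
  assumes null: "\<And>x u. x \<in> eigsp a \<Longrightarrow> u \<in> m \<Longrightarrow> Aop (bm x u) - a *\<^sub>R bm x u = 0"
  shows "alg_ideal m bm (eigsp a)"
proof -
  have closed: "bm v u \<in> eigsp a" if "v \<in> eigsp a" "u \<in> m" for v u
  proof -
    have "Aop (bm v u) = a *\<^sub>R bm v u" using null[OF that] by simp
    then have "A (bm v u) w = a * ip (bm v u) w" if "w \<in> m" for w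
      using Aop(2)[OF that, of "bm v u"] by (simp add: bilinear_lmul[OF ip_bilinear])
    then show ?thesis unfolding eigenspace_rel_def using bm_in by blast
  qed
  have sub: "subspace (eigsp a)" by (rule subspace_eigenspace_rel[OF m_subspace ip_bilinear A_bilinear])
  have "bm u v \<in> eigsp a" if "v \<in> eigsp a" "u \<in> m" for u v
    using bm_anticomm[of u v] closed[OF that] subspace_neg[OF sub] by metis
  moreover have "eigsp a \<subseteq> m" unfolding eigenspace_rel_def by blast
  ultimately show ?thesis unfolding alg_ideal_def using sub closed by blast
qed

lemma nilpotent_imp_eigenspace_ideal:
  assumes "nilpotent_alg m bm"
  shows "alg_ideal m bm (eigsp a)"
proof (rule eigenspace_ideal_if_shifted_ad_null)
  fix x u assume x: "x \<in> eigsp a" and "u \<in> m"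
  obtain t where "t > 0" and null: "\<And>y. prod_of m bm t y \<Longrightarrow> y = 0"
    using assms unfolding nilpotent_alg_def by blast
  have "x \<in> m" using x unfolding eigenspace_rel_def by blast
  then have "\<forall>w\<in>m. (bm x ^^ (t - 1)) w = 0"
    using prod_of_funpow[of x m _ bm "t - 1"] null \<open>t > 0\<close> by simp
  then show "Aop (bm x u) - a *\<^sub>R bm x u = 0"
    using nilpotent_skew_null[OF _ _ linear_shifted_Aop skew_shifted_ad[OF x]] bm_in shifted_Aop_in \<open>u \<in> m\<close>
    by blast
qed

lemma split_solvable_imp_eigenspace_ideal:
  assumes "split_solvable_alg m bm"
  shows "alg_ideal m bm (eigsp a)"
proof (rule eigenspace_ideal_if_shifted_ad_null)
  fix x u assume x: "x \<in> eigsp a" and "u \<in> m"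
  obtain c p where c: "c 0 = m" "c p = {0}" "\<forall>i\<le>p. alg_ideal m bm (c i)"
    "\<forall>i<p. c (Suc i) \<subseteq> c i \<and> dim (c i) = dim (c (Suc i)) + 1"
    using assms unfolding split_solvable_alg_def by blast
  have "x \<in> m" using x unfolding eigenspace_rel_def by blast
  then have "\<forall>i\<le>p. subspace (c i) \<and> c i \<subseteq> m \<and> (\<forall>v\<in>c i. bm x v \<in> c i)"
    using c(3) unfolding alg_ideal_def by blast
  then show "Aop (bm x u) - a *\<^sub>R bm x u = 0"
    using flag_skew_null[OF linear_bm_left _ linear_shifted_Aop skew_shifted_ad[OF x] c(1,2) _ c(4)]
      shifted_Aop_in \<open>u \<in> m\<close> by blast
qed

lemma eigenvalue_exists:
  assumes "m \<noteq> {0}"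
  obtains a where "is_eigenvalue_rel m ip A a"
proof -
  obtain x0 a where "x0 \<in> m" "x0 \<noteq> 0" "\<forall>y\<in>m. A x0 y = a * ip x0 y"
    using rayleigh_max_eigenvector[OF assms A_bilinear A_sym] by blast
  then have "x0 \<in> eigsp a" unfolding eigenspace_rel_def by blast
  with \<open>x0 \<noteq> 0\<close> have "is_eigenvalue_rel m ip A a" unfolding is_eigenvalue_rel_def by blast
  then show ?thesis by (rule that)
qed

end

lemma reductive_codazzi_intro:
  assumes "lie_bracket br" "reductive_decomp br h m" "invariant_metric br h m ip"
    "invariant_sym_tensor br h m A" "codazzi br h m ip A"
  shows "reductive_codazzi m ip br h A"
  using assms unfolding lie_bracket_def reductive_decomp_def invariant_metric_def invariant_sym_tensor_def
  by unfold_locales blast+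

theorem proposition2p1:
  fixes br :: "'v::euclidean_space \<Rightarrow> 'v \<Rightarrow> 'v"
    and h m :: "'v set"
    and ip A :: "'v \<Rightarrow> 'v \<Rightarrow> real"
  assumes "lie_bracket br"
    and "reductive_decomp br h m"
    and "invariant_metric br h m ip"
    and "invariant_sym_tensor br h m A"
    and "essential_codazzi br h m ip A"
  shows "\<not> nilpotent_alg m (brm br h m) \<and> \<not> split_solvable_alg m (brm br h m)"
proof -
  have "codazzi br h m ip A" using assms(5) unfolding essential_codazzi_def by blast
  then interpret reductive_codazzi m ip br h A
    using reductive_codazzi_intro assms(1-4) by blast
  obtain x y z where "x \<in> m" "y \<in> m" "z \<in> m" "cov x y z \<noteq> 0"
    using assms(5) unfolding essential_codazzi_def by blast
  then have "m \<noteq> {0}"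
    by (auto simp: cov_deriv_def bilinear_lzero[OF A_bilinear] bilinear_rzero[OF A_bilinear])
  then obtain a where "is_eigenvalue_rel m ip A a" by (rule eigenvalue_exists)
  then have "\<not> alg_ideal m bm (eigsp a)"
    using assms(5) unfolding essential_codazzi_def by blast
  then show ?thesis
    using nilpotent_imp_eigenspace_ideal split_solvable_imp_eigenspace_ideal by blast
qed

end
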